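(* There exists a family $\mathcal{F}$ of real functions with $|\mathcal{F}| = 2^{\mathfrak{c}}$ such that every $F \in \mathcal{F}$ (viewed as its graph, a subspace of the Euclidean plane $\mathbb{R}^2$) is a connected, dense subset of $\mathbb{R}^2$, and the spaces in $\mathcal{F}$ are incomparable.
   Context: $\mathfrak{c} = 2^{\aleph_0}$. A real function is a function $F:\mathbb{R}\to\mathbb{R}$, identified with its graph $\{(x,F(x)) : x\in\mathbb{R}\}\subset\mathbb{R}^2$ and carrying the subspace topology of the Euclidean plane. Topological spaces $X_i$ ($i\in I$) are called incomparable if, for all $i,j\in I$, whenever $X_i$ is homeomorphic to a subspace $S_j$ of $X_j$, then $i=j$ and $S_j = X_j$; i.e. the spaces are pairwise non-homeomorphic, no one is homeomorphic to a subspace of another, and none is homeomorphic to a proper subspace of itself. *)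

theory Defs
  imports "HOL-Analysis.Analysis" "HOL-Library.Equipollence"
begin

definition graph_of :: "(real \<Rightarrow> real) \<Rightarrow> (real \<times> real) set" where
  "graph_of f = {(x, f x) | x. True}"

definition incomparable_graphs :: "(real \<Rightarrow> real) set \<Rightarrow> bool" where
  "incomparable_graphs \<F> \<longleftrightarrow>
     (\<forall>f\<in>\<F>. \<forall>g\<in>\<F>. \<forall>S. S \<subseteq> graph_of g \<and> graph_of f homeomorphic S
        \<longrightarrow> f = g \<and> S = graph_of g)"

end

theory Submission
  imports Defs
begin

text \<open>
  The functions are built by one transfinite recursion along a well-order of the reals whose
  initial segments have fewer than continuum many elements. It enumerates all closed sets \<open>K\<close> in
  the plane and all closures of graphs of continuous maps \<open>h\<close> defined on \<open>G\<^sub>\<delta>\<close> subsets of the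
  plane. Since each stage has fewer than continuum many abscissae in use, it can put a point of
  \<open>K\<close> on the graph (when the projection of \<open>K\<close> contains an interval) and reserve a fresh marker
  abscissa. For \<open>X \<subseteq> \<real>\<close>, the function \<open>f\<^sub>X\<close> extends the constructed partial function and takes
  the value 1 or 0 at the \<open>\<alpha>\<close>-th marker according as \<open>\<alpha> \<in> X\<close>. Meeting every such \<open>K\<close> makes
  each graph a Jones set, hence connected and dense. An embedding of one graph into another
  extends (Lavrentiev) to a continuous map on a \<open>G\<^sub>\<delta>\<close> set. If it moved a point, then the stage
  devoted to this map added either two points with the same image, or a point whose image lies
  on a vertical line where every member of the family passes through a prescribed point, but is
  not such a point. So every embedding is the identity.
\<close>

unbundle cardinal_syntax

section \<open>Sets of cardinality less than the continuum\<close>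

definition sub_continuum :: "'a set \<Rightarrow> bool" where
  "sub_continuum S \<longleftrightarrow> |S| <o |UNIV :: real set|"

lemma infinite_UNIV_real: "infinite (UNIV :: real set)"
  by (simp add: infinite_UNIV_char_0)

lemma finite_sub_continuum: "finite S \<Longrightarrow> sub_continuum S"
  unfolding sub_continuum_def
  using finite_ordLess_infinite[OF card_of_Well_order card_of_Well_order, of S "UNIV :: real set"]
    infinite_UNIV_real by (simp add: Field_card_of)

lemma sub_continuum_Un: "sub_continuum A \<Longrightarrow> sub_continuum B \<Longrightarrow> sub_continuum (A \<union> B)"
  unfolding sub_continuum_def by (rule card_of_Un_ordLess_infinite[OF infinite_UNIV_real])

lemma sub_continuum_subset: "A \<subseteq> B \<Longrightarrow> sub_continuum B \<Longrightarrow> sub_continuum A"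
  unfolding sub_continuum_def using card_of_mono1 ordLeq_ordLess_trans by blast

lemma sub_continuum_image: "sub_continuum A \<Longrightarrow> sub_continuum (f ` A)"
  unfolding sub_continuum_def using card_of_image ordLeq_ordLess_trans by blast

lemma sub_continuum_inj_on:
  "inj_on f A \<Longrightarrow> f ` A \<subseteq> B \<Longrightarrow> sub_continuum B \<Longrightarrow> sub_continuum A"
  unfolding sub_continuum_def by (rule ordLeq_ordLess_trans[OF card_of_ordLeqI]) auto

lemma sub_continuum_Times:
  assumes "sub_continuum A"
  shows "sub_continuum (A \<times> A)"
proof (cases "finite A")
  case False
  then show ?thesis
    using assms card_of_Times_same_infinite ordIso_ordLess_trans unfolding sub_continuum_def by blast
qed (simp add: finite_sub_continuum)

lemma interval_not_sub_continuum:
  fixes a b :: real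
  assumes "a < b"
  shows "\<not> sub_continuum {a<..<b}"
  using open_interval_eqpoll_reals[THEN iffD2, OF assms]
  unfolding sub_continuum_def eqpoll_iff_card_of_ordIso
  by (meson ordIso_ordLess_trans ordIso_symmetric ordLess_irreflexive)

lemma interval_not_subset_sub_continuum:
  fixes a b :: real
  assumes "a < b" "sub_continuum S"
  obtains x where "a < x" "x < b" "x \<notin> S"
  using interval_not_sub_continuum[OF assms(1)] sub_continuum_subset[of _ S] assms(2)
  by (metis greaterThanLessThan_iff subsetI)

lemma ex_notin_sub_continuum: "sub_continuum S \<Longrightarrow> \<exists>z::real. z \<notin> S"
  using interval_not_subset_sub_continuum[of 0 1 S] by auto

section \<open>Baire category\<close>

lemma Icc_subset_closure_Diff_nowhere_dense:
  fixes C :: "real set"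
  assumes "interior C = {}" "c < d"
  shows "{c..d} \<subseteq> closure ({c..d} - C)"
proof -
  have "{c<..<d} \<subseteq> closure ({c<..<d} \<inter> - C)"
    using open_Int_closure_subset[of "{c<..<d}" "- C"] assms(1) by (simp add: closure_complement)
  also have "\<dots> \<subseteq> closure ({c..d} - C)"
    by (intro closure_mono) auto
  finally show ?thesis
    using closure_minimal[of "{c<..<d}" "closure ({c..d} - C)"] closure_greaterThanLessThan[OF assms(2)]
    by simp
qed

lemma Baire_Icc_avoid:
  fixes \<C> :: "real set set"
  assumes "countable \<C>" and nowhere_dense: "\<And>C. C \<in> \<C> \<Longrightarrow> closed C \<and> interior C = {}"
    and "c < d"
  obtains e where "e \<in> {c..d}" "e \<notin> \<Union>\<C>"
proof -
  define \<G> where "\<G> = insert {c..d} ((\<lambda>C. {c..d} - C) ` \<C>)"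
  have "{c..d} \<subseteq> closure (\<Inter>\<G>)"
  proof (rule Baire)
    show "countable \<G>"
      using assms(1) by (simp add: \<G>_def)
    fix T assume "T \<in> \<G>"
    then consider "T = {c..d}" | C where "C \<in> \<C>" "T = {c..d} \<inter> - C"
      unfolding \<G>_def by blast
    then show "openin (top_of_set {c..d}) T \<and> {c..d} \<subseteq> closure T"
    proof cases
      case 2
      then show ?thesis
        using nowhere_dense[OF 2(1)] Icc_subset_closure_Diff_nowhere_dense[OF _ \<open>c < d\<close>, of C]
        by (auto simp: Diff_eq intro!: openin_open_Int)
    qed (use closure_subset in auto)
  qed simp
  moreover have "{c..d} \<noteq> {}"
    using \<open>c < d\<close> by simp
  ultimately obtain e where "e \<in> \<Inter>\<G>"
    by (metis closure_empty ex_in_conv subset_empty)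
  then have "e \<in> {c..d}" "e \<notin> \<Union>\<C>"
    unfolding \<G>_def by blast+
  then show thesis by (rule that)
qed

text \<open>A Steinhaus-type argument: the differences of a comeagre subset of an interval fill a
  neighbourhood of \<open>0\<close>, so such a set cannot have cardinality below the continuum.\<close>

lemma Baire_avoid_sub_continuum:
  fixes \<C> :: "real set set"
  assumes "countable \<C>" and nowhere_dense: "\<And>C. C \<in> \<C> \<Longrightarrow> closed C \<and> interior C = {}"
    and "a < b" and "sub_continuum S"
  obtains x where "a < x" "x < b" "x \<notin> \<Union>\<C>" "x \<notin> S"
proof -
  define \<epsilon> where "\<epsilon> = (b - a) / 4"
  have \<epsilon>: "\<epsilon> > 0" "a + \<epsilon> < b - \<epsilon>"
    using \<open>a < b\<close> by (simp_all add: \<epsilon>_def field_simps)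
  have "\<exists>x. a < x \<and> x < b \<and> x \<notin> \<Union>\<C> \<and> x \<notin> S"
  proof (rule ccontr)
    assume "\<nexists>x. a < x \<and> x < b \<and> x \<notin> \<Union>\<C> \<and> x \<notin> S"
    then have inS: "x \<in> S" if "a < x" "x < b" "x \<notin> \<Union>\<C>" for x
      using that by blast
    have "{-\<epsilon><..<\<epsilon>} \<subseteq> (\<lambda>(u, v). u - v) ` (S \<times> S)"
    proof
      fix t assume t: "t \<in> {-\<epsilon><..<\<epsilon>}"
      have "countable (\<C> \<union> (\<lambda>C. (+) t ` C) ` \<C>)"
        using assms(1) by simp
      moreover have "closed C \<and> interior C = {}" if "C \<in> \<C> \<union> (\<lambda>C. (+) t ` C) ` \<C>" for C
        using that nowhere_dense by (auto simp: closed_translation interior_translation)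
      ultimately obtain e where e: "e \<in> {a + \<epsilon>..b - \<epsilon>}" "e \<notin> \<Union>(\<C> \<union> (\<lambda>C. (+) t ` C) ` \<C>)"
        by (rule Baire_Icc_avoid[OF _ _ \<epsilon>(2)]) blast+
      have "e - t \<notin> \<Union>\<C>"
      proof
        assume "e - t \<in> \<Union>\<C>"
        then obtain C where "C \<in> \<C>" "e - t \<in> C" by blast
        then have "e \<in> \<Union>((\<lambda>C. (+) t ` C) ` \<C>)"
          by (auto intro!: image_eqI[of e "(+) t" "e - t"])
        then show False using e(2) by blast
      qed
      then have "e \<in> S" "e - t \<in> S"
        using e t \<epsilon>(1) by (auto intro!: inS)
      then show "t \<in> (\<lambda>(u, v). u - v) ` (S \<times> S)"
        by (intro image_eqI[of _ _ "(e, e - t)"]) auto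
    qed
    then have "sub_continuum {-\<epsilon><..<\<epsilon>}"
      using sub_continuum_subset sub_continuum_image sub_continuum_Times assms(4) by blast
    then show False
      using interval_not_sub_continuum[of "-\<epsilon>" \<epsilon>] \<epsilon>(1) by simp
  qed
  then show thesis
    using that by blast
qed

section \<open>Jones sets\<close>

text \<open>For graphs this is the defining property of a Jones function.\<close>

definition jones_set :: "(real \<times> real) set \<Rightarrow> bool" where
  "jones_set G \<longleftrightarrow>
     (\<forall>K a b. closed K \<and> K \<inter> G = {} \<and> a < b \<longrightarrow> \<not> {a<..<b} \<subseteq> fst ` K)"

lemma graph_of_iff: "(x, y) \<in> graph_of f \<longleftrightarrow> y = f x"
  by (auto simp: graph_of_def)

lemma dist_horizontal: "dist (x, y) (x', y) = \<bar>x - x'\<bar>" for x x' y :: real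
  by (simp add: dist_Pair_Pair dist_real_def)

lemma jones_set_dense:
  assumes "jones_set G"
  shows "closure G = UNIV"
proof -
  have "\<exists>q\<in>G. dist q p < e" if "e > 0" for p :: "real \<times> real" and e
  proof -
    obtain x0 y0 where p: "p = (x0, y0)" by fastforce
    have "{x0 - e/2<..<x0 + e/2} \<subseteq> fst ` cball p (e/2)"
    proof
      fix x assume "x \<in> {x0 - e/2<..<x0 + e/2}"
      then have "(x, y0) \<in> cball p (e/2)"
        by (simp add: p dist_horizontal abs_if)
      then show "x \<in> fst ` cball p (e/2)"
        by (metis fst_conv image_eqI)
    qed
    moreover have "x0 - e/2 < x0 + e/2"
      using \<open>e > 0\<close> by simp
    ultimately have "cball p (e/2) \<inter> G \<noteq> {}"
      using assms unfolding jones_set_def by blast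
    then show ?thesis
      using \<open>e > 0\<close> by (force simp: dist_commute)
  qed
  then show ?thesis by (auto simp: closure_approachable)
qed

lemma disconnected_open_separation:
  fixes S :: "'a::euclidean_space set"
  assumes "\<not> connected S"
  obtains U V where "open U" "open V" "U \<inter> V = {}" "S \<subseteq> U \<union> V" "U \<inter> S \<noteq> {}" "V \<inter> S \<noteq> {}"
proof -
  obtain C1 C2 where C: "C1 \<union> C2 = S" "C1 \<noteq> {}" "C2 \<noteq> {}" "separatedin euclidean C1 C2"
    using assms connectedin_eq_not_separated[of euclidean S] by auto
  then have "C1 \<inter> closure C2 = {}" "C2 \<inter> closure C1 = {}"
    by (auto simp: separatedin_def euclidean_closure_of)
  then obtain U V where "U \<inter> V = {}" "open U" "open V" "C1 \<subseteq> U" "C2 \<subseteq> V"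
    by (rule separation_closures)
  with C show thesis by (intro that[of U V]) auto
qed

lemma interior_eq_empty_no_interval:
  fixes C :: "real set"
  assumes "\<And>a b. a < b \<Longrightarrow> \<not> {a<..<b} \<subseteq> C"
  shows "interior C = {}"
proof (rule ccontr)
  assume "interior C \<noteq> {}"
  then obtain x e where "e > 0" "ball x e \<subseteq> C"
    by (auto simp: mem_interior)
  moreover have "{x - e<..<x + e} \<subseteq> ball x e"
    by (auto simp: dist_real_def)
  ultimately show False
    using assms[of "x - e" "x + e"] by auto
qed

lemma interior_Int_off_no_interval:
  fixes C :: "real set"
  assumes "\<And>a b. a < b \<Longrightarrow> \<not> {a<..<b} \<subseteq> C" and "\<And>x. \<not> (P x \<and> Q x)"
  shows "interior {x. x \<notin> C \<longrightarrow> P x} \<inter> interior {x. x \<notin> C \<longrightarrow> Q x} = {}"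
proof -
  have "{x. x \<notin> C \<longrightarrow> P x} \<inter> {x. x \<notin> C \<longrightarrow> Q x} \<subseteq> C"
    using assms(2) by blast
  then show ?thesis
    using interior_eq_empty_no_interval[OF assms(1)] by (metis interior_Int interior_mono subset_empty)
qed

text \<open>Split the graph by disjoint open sets \<open>U\<close>, \<open>V\<close>. Outside the projection \<open>C\<close> of the closed
  set \<open>-(U \<union> V)\<close>, whole vertical lines lie in \<open>U\<close> or in \<open>V\<close>, and \<open>C\<close> contains no interval; this
  splits the real line into the two disjoint open sets of points near which the lines avoiding
  \<open>C\<close> lie in \<open>U\<close>, resp. in \<open>V\<close>.\<close>

lemma jones_set_graph_connected:
  assumes J: "jones_set (graph_of f)"
  shows "connected (graph_of f)"
proof (rule ccontr)
  let ?G = "graph_of f"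
  assume "\<not> connected ?G"
  then obtain U V where UV: "open U" "open V" "U \<inter> V = {}" "?G \<subseteq> U \<union> V"
    and nonempty: "U \<inter> ?G \<noteq> {}" "V \<inter> ?G \<noteq> {}"
    by (rule disconnected_open_separation)
  define C where "C = fst ` (- (U \<union> V))"
  have no_interval: "\<not> {a<..<b} \<subseteq> C" if "a < b" for a b
  proof -
    have "closed (- (U \<union> V))" "- (U \<union> V) \<inter> ?G = {}"
      using UV by auto
    then show ?thesis
      using J that unfolding jones_set_def C_def by blast
  qed
  have line: "{x} \<times> UNIV \<subseteq> U \<or> {x} \<times> UNIV \<subseteq> V" if "x \<notin> C" for x
  proof -
    have "{x} \<times> UNIV \<subseteq> U \<union> V"
      using that by (force simp: C_def)
    moreover have "U \<inter> ({x} \<times> UNIV) = {} \<or> V \<inter> ({x} \<times> UNIV) = {}"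
      using calculation UV by (intro connectedD[OF connected_Times]) auto
    ultimately show ?thesis by blast
  qed
  define side where "side W = interior {x. x \<notin> C \<longrightarrow> {x} \<times> UNIV \<subseteq> W}"
    for W :: "(real \<times> real) set"
  have near: "x \<in> side W"
    if W: "W = U \<and> W' = V \<or> W = V \<and> W' = U" "(x, f x) \<in> W" for W W' x
  proof -
    obtain \<rho> where "\<rho> > 0" "ball (x, f x) \<rho> \<subseteq> W"
      using W UV(1,2) open_contains_ball by blast
    have "{x'} \<times> UNIV \<subseteq> W" if "x' \<in> ball x \<rho>" "x' \<notin> C" for x'
    proof -
      have "(x', f x) \<in> W"
        using that(1) \<open>ball (x, f x) \<rho> \<subseteq> W\<close> by (auto simp: dist_horizontal dist_real_def)
      moreover have "(x', f x) \<notin> W'"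
        using calculation W(1) UV(3) by blast
      ultimately show ?thesis
        using line[OF that(2)] W(1) by blast
    qed
    then have "ball x \<rho> \<subseteq> {x. x \<notin> C \<longrightarrow> {x} \<times> UNIV \<subseteq> W}"
      by blast
    then show ?thesis
      unfolding side_def using \<open>\<rho> > 0\<close> by (meson centre_in_ball interior_maximal open_ball subsetD)
  qed
  have "\<not> ({x} \<times> UNIV \<subseteq> U \<and> {x} \<times> UNIV \<subseteq> V)" for x
    using UV(3) by blast
  then have "side U \<inter> side V = {}"
    unfolding side_def using no_interval by (intro interior_Int_off_no_interval)
  moreover have "UNIV \<subseteq> side U \<union> side V"
  proof
    fix x
    have "(x, f x) \<in> U \<or> (x, f x) \<in> V"
      using UV(4) graph_of_iff[of x "f x" f] by blast
    then show "x \<in> side U \<union> side V"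
      using near[of U V x] near[of V U x] by blast
  qed
  moreover have "side U \<noteq> {}" "side V \<noteq> {}"
    using nonempty near[of U V] near[of V U] by (auto simp: graph_of_def)
  ultimately show False
    using connectedD[OF connected_UNIV, of "side U" "side V"] by (auto simp: side_def)
qed

lemma closed_fst_image_Int_box:
  fixes K :: "(real \<times> real) set"
  assumes "closed K"
  shows "closed (fst ` (K \<inter> ({a..b} \<times> {c..d})))"
proof -
  have "compact (K \<inter> ({a..b} \<times> {c..d}))"
    using assms by (intro closed_Int_compact compact_Times compact_Icc)
  then show ?thesis
    by (intro compact_imp_closed compact_continuous_image continuous_on_fst continuous_on_id)
qed

lemma jones_set_interior_fst_image:
  assumes "jones_set G" "closed K" "K \<inter> G = {}" "C \<subseteq> fst ` K"
  shows "interior C = {}"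
  using assms unfolding jones_set_def by (intro interior_eq_empty_no_interval) blast

text \<open>Points of a horizontal line outside \<open>\<Inter>\<U>\<close> project onto a countable union of closed
  nowhere dense sets.\<close>

lemma jones_set_Gdelta_horizontal:
  fixes \<U> :: "(real \<times> real) set set"
  assumes J: "jones_set G" and "countable \<U>" and open_\<U>: "\<And>U. U \<in> \<U> \<Longrightarrow> open U"
    and "G \<subseteq> \<Inter>\<U>" and "a < b" and "sub_continuum S"
  obtains x where "a < x" "x < b" "x \<notin> S" "(x, y) \<in> \<Inter>\<U>"
proof -
  define \<C> where "\<C> = (\<lambda>U. fst ` (- U \<inter> ({a..b} \<times> {y..y}))) ` \<U>"
  have "countable \<C>"
    unfolding \<C>_def using \<open>countable \<U>\<close> by simp
  moreover have "closed C \<and> interior C = {}" if "C \<in> \<C>" for C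
  proof -
    obtain U where U: "U \<in> \<U>" and C: "C = fst ` (- U \<inter> ({a..b} \<times> {y..y}))"
      using \<open>C \<in> \<C>\<close> unfolding \<C>_def by auto
    have "closed (- U \<inter> ({a..b} \<times> {y..y}))"
      using open_\<U>[OF U] by (intro closed_Int closed_Times) auto
    moreover have "(- U \<inter> ({a..b} \<times> {y..y})) \<inter> G = {}"
      using U \<open>G \<subseteq> \<Inter>\<U>\<close> by blast
    ultimately have "interior C = {}"
      unfolding C by (rule jones_set_interior_fst_image[OF J]) simp
    moreover have "closed C"
      using open_\<U>[OF U] unfolding C by (intro closed_fst_image_Int_box) auto
    ultimately show ?thesis by simp
  qed
  ultimately obtain x where x: "a < x" "x < b" "x \<notin> \<Union>\<C>" "x \<notin> S"
    by (rule Baire_avoid_sub_continuum[OF _ _ \<open>a < b\<close> \<open>sub_continuum S\<close>]) blast+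
  have "(x, y) \<in> U" if "U \<in> \<U>" for U
  proof (rule ccontr)
    assume "(x, y) \<notin> U"
    then have "x \<in> fst ` (- U \<inter> ({a..b} \<times> {y..y}))"
      using x(1,2) by (intro image_eqI[of x fst "(x, y)"]) auto
    then show False
      using x(3) \<open>U \<in> \<U>\<close> unfolding \<C>_def by blast
  qed
  with x show thesis
    using that by blast
qed

section \<open>Coding closed sets by reals\<close>

lemma closed_sets_lepoll_nat_sets:
  "{K :: 'a::second_countable_topology set. closed K} \<lesssim> (UNIV :: nat set set)"
proof -
  obtain \<B> :: "'a set set" where "countable \<B>" and "topological_basis \<B>"
    using ex_countable_basis by blast
  define code where "code K = to_nat_on \<B> ` {B\<in>\<B>. B \<inter> K = {}}" for K :: "'a set"
  have complement: "K = - \<Union>{B\<in>\<B>. B \<inter> K = {}}" if "closed K" for K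
  proof -
    have "open (- K)"
      using \<open>closed K\<close> by (simp add: open_Compl)
    then obtain \<B>' where "\<B>' \<subseteq> \<B>" "\<Union>\<B>' = - K"
      using \<open>topological_basis \<B>\<close> unfolding topological_basis_def by blast
    then show ?thesis by blast
  qed
  have "inj_on code {K. closed K}"
  proof (rule inj_onI)
    fix K1 K2 assume "K1 \<in> {K. closed K}" "K2 \<in> {K. closed K}" "code K1 = code K2"
    then have "{B\<in>\<B>. B \<inter> K1 = {}} = {B\<in>\<B>. B \<inter> K2 = {}}"
      unfolding code_def
      by (subst (asm) inj_on_image_eq_iff[OF inj_on_to_nat_on[OF \<open>countable \<B>\<close>]]) auto
    then show "K1 = K2"
      using complement[of K1] complement[of K2] \<open>K1 \<in> _\<close> \<open>K2 \<in> _\<close> by simp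
  qed
  then show ?thesis
    unfolding lepoll_def by blast
qed

lemma closed_sets_lepoll_reals:
  "{K :: 'a::second_countable_topology set. closed K} \<lesssim> (UNIV :: real set)"
  using closed_sets_lepoll_nat_sets nat_sets_eqpoll_reals by (rule lepoll_trans2)

type_synonym point = "real \<times> real"

text \<open>The tasks of the construction: closed sets \<open>K\<close> that the graph has to meet, and closures
  of graphs of continuous maps on \<open>G\<^sub>\<delta>\<close> subsets of the plane that have to be defeated.\<close>

type_synonym task = "point set + (point \<times> point) set"

definition tasks :: "task set" where
  "tasks = {K. closed K} <+> {\<Gamma>. closed \<Gamma>}"

lemma tasks_lepoll_reals: "tasks \<lesssim> (UNIV :: real set)"
proof -
  have "tasks \<lesssim> (UNIV :: real set) <+> (UNIV :: real set)"
    unfolding tasks_def by (intro sum_lepoll_mono closed_sets_lepoll_reals)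
  also have "(UNIV :: real set) <+> (UNIV :: real set) \<approx> (UNIV :: real set)"
    unfolding eqpoll_iff_card_of_ordIso
    using card_of_Plus_infinite1[OF infinite_UNIV_real ordLeq_refl[OF card_of_Card_order]] .
  finally show ?thesis .
qed

definition task_of :: "real \<Rightarrow> task" where
  "task_of = (SOME g. tasks \<subseteq> range g)"

lemma tasks_subset_range_task_of: "tasks \<subseteq> range task_of"
proof -
  have "\<exists>g :: real \<Rightarrow> task. tasks \<subseteq> range g"
    using tasks_lepoll_reals by (simp add: lepoll_iff)
  then show ?thesis
    unfolding task_of_def by (rule someI_ex)
qed

lemma task_of_Inl: "closed K \<Longrightarrow> \<exists>\<alpha>. task_of \<alpha> = Inl K"
  using tasks_subset_range_task_of by (force simp: tasks_def)

lemma task_of_Inr: "closed \<Gamma> \<Longrightarrow> \<exists>\<alpha>. task_of \<alpha> = Inr \<Gamma>"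
  using tasks_subset_range_task_of by (force simp: tasks_def)

section \<open>The transfinite construction\<close>

text \<open>The cardinal well-order of the reals: its initial segments have cardinality below the
  continuum.\<close>

abbreviation continuum_order :: "real rel" where
  "continuum_order \<equiv> |UNIV :: real set|"

text \<open>A stage adds two points (equal if one suffices) to the graph under construction and reserves
  a marker abscissa, at which the members of the family will differ.\<close>

type_synonym stage = "(point \<times> point) \<times> real"

definition stage_points :: "stage \<Rightarrow> point set" where
  "stage_points s = {fst (fst s), snd (fst s)}"

definition earlier_points :: "(real \<Rightarrow> stage) \<Rightarrow> real \<Rightarrow> point set" where
  "earlier_points S \<alpha> = (\<Union>\<beta>\<in>underS continuum_order \<alpha>. stage_points (S \<beta>))"

definition earlier_markers :: "(real \<Rightarrow> stage) \<Rightarrow> real \<Rightarrow> real set" where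
  "earlier_markers S \<alpha> = (\<lambda>\<beta>. snd (S \<beta>)) ` underS continuum_order \<alpha>"

definition used_reals :: "(real \<Rightarrow> stage) \<Rightarrow> real \<Rightarrow> real set" where
  "used_reals S \<alpha> = fst ` earlier_points S \<alpha> \<union> earlier_markers S \<alpha>"

definition admissible :: "(real \<Rightarrow> stage) \<Rightarrow> real \<Rightarrow> stage \<Rightarrow> bool" where
  "admissible S \<alpha> s \<longleftrightarrow> (\<forall>p\<in>stage_points s. fst p \<notin> used_reals S \<alpha>) \<and>
     (fst (fst (fst s)) = fst (snd (fst s)) \<longrightarrow> fst (fst s) = snd (fst s)) \<and>
     snd s \<notin> used_reals S \<alpha> \<and> snd s \<notin> fst ` stage_points s"

definition graph_fun :: "(point \<times> point) set \<Rightarrow> point \<Rightarrow> point" where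
  "graph_fun \<Gamma> p = (SOME q. (p, q) \<in> \<Gamma>)"

definition determined_abscissae :: "(real \<Rightarrow> stage) \<Rightarrow> real \<Rightarrow> stage \<Rightarrow> real set" where
  "determined_abscissae S \<alpha> s = fst ` (earlier_points S \<alpha> \<union> stage_points s) \<union> earlier_markers S \<alpha>"

definition allowed_points :: "(real \<Rightarrow> stage) \<Rightarrow> real \<Rightarrow> stage \<Rightarrow> point set" where
  "allowed_points S \<alpha> s = earlier_points S \<alpha> \<union> stage_points s \<union> earlier_markers S \<alpha> \<times> {0, 1}"

text \<open>Over a determined abscissa every member of the family passes through an allowed point, so
  a map defeated at stage \<open>s\<close> embeds no member into another.\<close>

definition defeats :: "(point \<Rightarrow> point) \<Rightarrow> (real \<Rightarrow> stage) \<Rightarrow> real \<Rightarrow> stage \<Rightarrow> bool" where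
  "defeats h S \<alpha> s \<longleftrightarrow>
     (\<exists>p\<in>stage_points s. \<exists>q\<in>stage_points s. fst p \<noteq> fst q \<and> h p = h q) \<or>
     (\<exists>p\<in>stage_points s. fst (h p) \<in> determined_abscissae S \<alpha> s \<and> h p \<notin> allowed_points S \<alpha> s)"

definition fulfils :: "task \<Rightarrow> (real \<Rightarrow> stage) \<Rightarrow> real \<Rightarrow> stage \<Rightarrow> bool" where
  "fulfils t S \<alpha> s =
     (case t of Inl K \<Rightarrow> stage_points s \<inter> K \<noteq> {} | Inr \<Gamma> \<Rightarrow> defeats (graph_fun \<Gamma>) S \<alpha> s)"

definition next_stage :: "(real \<Rightarrow> stage) \<Rightarrow> real \<Rightarrow> stage" where
  "next_stage S \<alpha> = (SOME s. admissible S \<alpha> s \<and>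
     ((\<exists>s'. admissible S \<alpha> s' \<and> fulfils (task_of \<alpha>) S \<alpha> s') \<longrightarrow> fulfils (task_of \<alpha>) S \<alpha> s))"

definition stage :: "real \<Rightarrow> stage" where
  "stage = wfrec (continuum_order - Id) next_stage"

lemma sub_continuum_underS: "sub_continuum (underS continuum_order \<alpha>)"
  unfolding sub_continuum_def using card_of_underS[OF card_of_Card_order, of \<alpha> UNIV]
  by (simp add: Field_card_of)

lemma sub_continuum_earlier_points: "sub_continuum (earlier_points S \<alpha>)"
proof -
  have "earlier_points S \<alpha> = (\<lambda>\<beta>. fst (fst (S \<beta>))) ` underS continuum_order \<alpha> \<union>
      (\<lambda>\<beta>. snd (fst (S \<beta>))) ` underS continuum_order \<alpha>"
    unfolding earlier_points_def stage_points_def by blast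
  then show ?thesis
    by (simp add: sub_continuum_Un sub_continuum_image sub_continuum_underS)
qed

lemma sub_continuum_earlier_markers: "sub_continuum (earlier_markers S \<alpha>)"
  unfolding earlier_markers_def by (intro sub_continuum_image sub_continuum_underS)

lemma sub_continuum_used_reals: "sub_continuum (used_reals S \<alpha>)"
  unfolding used_reals_def
  by (intro sub_continuum_Un sub_continuum_image sub_continuum_earlier_points
      sub_continuum_earlier_markers)

lemma sub_continuum_earlier_markers_Times: "sub_continuum (earlier_markers S \<alpha> \<times> {0 :: real, 1})"
proof -
  have "earlier_markers S \<alpha> \<times> {0 :: real, 1} =
      (\<lambda>z. (z, 0)) ` earlier_markers S \<alpha> \<union> (\<lambda>z. (z, 1)) ` earlier_markers S \<alpha>"
    by auto
  then show ?thesis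
    by (simp add: sub_continuum_Un sub_continuum_image sub_continuum_earlier_markers)
qed

lemma ex_admissible:
  assumes "fst p \<notin> used_reals S \<alpha>" "fst q \<notin> used_reals S \<alpha>" "fst p = fst q \<Longrightarrow> p = q"
  shows "\<exists>z. admissible S \<alpha> ((p, q), z)"
proof -
  obtain z where "z \<notin> used_reals S \<alpha> \<union> {fst p, fst q}"
    using ex_notin_sub_continuum sub_continuum_Un sub_continuum_used_reals finite_sub_continuum
    by (metis finite.emptyI finite_insert)
  then show ?thesis
    using assms unfolding admissible_def stage_points_def by auto
qed

lemma next_stage_cong:
  assumes "\<And>\<beta>. \<beta> \<in> underS continuum_order \<alpha> \<Longrightarrow> S \<beta> = S' \<beta>"
  shows "next_stage S \<alpha> = next_stage S' \<alpha>"
proof -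
  have earlier: "earlier_points S \<alpha> = earlier_points S' \<alpha>" "earlier_markers S \<alpha> = earlier_markers S' \<alpha>"
    using assms unfolding earlier_points_def earlier_markers_def by (auto simp: image_def)
  have "admissible S \<alpha> = admissible S' \<alpha>"
    unfolding admissible_def[abs_def] used_reals_def earlier ..
  moreover have "defeats h S \<alpha> = defeats h S' \<alpha>" for h
    unfolding defeats_def[abs_def] determined_abscissae_def allowed_points_def earlier ..
  then have "fulfils t S \<alpha> = fulfils t S' \<alpha>" for t
    unfolding fulfils_def[abs_def] by (simp split: sum.splits)
  ultimately show ?thesis
    unfolding next_stage_def by simp
qed

lemma stage_eq: "stage \<alpha> = next_stage stage \<alpha>"
proof -
  have "wf (continuum_order - Id)"
    using card_of_Well_order unfolding well_order_on_def by blast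
  moreover have "adm_wf (continuum_order - Id) next_stage"
    unfolding adm_wf_def by (auto intro!: next_stage_cong simp: underS_def)
  ultimately show ?thesis
    unfolding stage_def by (metis wfrec_fixpoint)
qed

lemma stage_admissible: "admissible stage \<alpha> (stage \<alpha>)"
  and stage_fulfils:
    "admissible stage \<alpha> s \<Longrightarrow> fulfils (task_of \<alpha>) stage \<alpha> s \<Longrightarrow> fulfils (task_of \<alpha>) stage \<alpha> (stage \<alpha>)"
proof -
  obtain x where "x \<notin> used_reals stage \<alpha>"
    using ex_notin_sub_continuum sub_continuum_used_reals by blast
  then obtain z where "admissible stage \<alpha> (((x, 0), (x, 0)), z)"
    using ex_admissible[of "(x, 0)" stage \<alpha> "(x, 0)"] by auto
  then have "\<exists>s. admissible stage \<alpha> s \<and> ((\<exists>s'. admissible stage \<alpha> s' \<and> fulfils (task_of \<alpha>) stage \<alpha> s')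
      \<longrightarrow> fulfils (task_of \<alpha>) stage \<alpha> s)"
    by blast
  then have "admissible stage \<alpha> (stage \<alpha>) \<and> ((\<exists>s'. admissible stage \<alpha> s' \<and>
      fulfils (task_of \<alpha>) stage \<alpha> s') \<longrightarrow> fulfils (task_of \<alpha>) stage \<alpha> (stage \<alpha>))"
    unfolding stage_eq[of \<alpha>] next_stage_def[of stage \<alpha>] by (rule someI_ex)
  then show "admissible stage \<alpha> (stage \<alpha>)"
    "admissible stage \<alpha> s \<Longrightarrow> fulfils (task_of \<alpha>) stage \<alpha> s \<Longrightarrow> fulfils (task_of \<alpha>) stage \<alpha> (stage \<alpha>)"
    by blast+
qed

section \<open>The family of functions\<close>

definition graph_points :: "point set" where
  "graph_points = (\<Union>\<alpha>. stage_points (stage \<alpha>))"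

definition base_fun :: "real \<Rightarrow> real" where
  "base_fun x = (THE y. (x, y) \<in> graph_points)"

definition marker :: "real \<Rightarrow> real" where
  "marker \<alpha> = snd (stage \<alpha>)"

definition marked_fun :: "real set \<Rightarrow> real \<Rightarrow> real" where
  "marked_fun X x =
     (if x \<in> fst ` graph_points then base_fun x else if x \<in> marker ` X then 1 else 0)"

lemma continuum_order_total: "\<alpha> \<noteq> \<beta> \<Longrightarrow> \<alpha> \<in> underS continuum_order \<beta> \<or> \<beta> \<in> underS continuum_order \<alpha>"
  using card_of_Well_order[of "UNIV :: real set"]
  unfolding well_order_on_def linear_order_on_def total_on_def underS_def
  by (simp add: Field_card_of)

lemma earlier_stage_used_reals:
  assumes "\<beta> \<in> underS continuum_order \<alpha>"
  shows "p \<in> stage_points (stage \<beta>) \<Longrightarrow> fst p \<in> used_reals stage \<alpha>"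
    and "marker \<beta> \<in> used_reals stage \<alpha>"
  using assms unfolding used_reals_def earlier_points_def earlier_markers_def marker_def by auto

lemma stage_points_fresh: "p \<in> stage_points (stage \<alpha>) \<Longrightarrow> fst p \<notin> used_reals stage \<alpha>"
  using stage_admissible[of \<alpha>] unfolding admissible_def by blast

lemma marker_fresh: "marker \<alpha> \<notin> used_reals stage \<alpha>" "marker \<alpha> \<notin> fst ` stage_points (stage \<alpha>)"
  using stage_admissible[of \<alpha>] unfolding admissible_def marker_def by blast+

lemma stage_points_same_fst:
  assumes "p \<in> stage_points (stage \<alpha>)" "q \<in> stage_points (stage \<alpha>)" "fst p = fst q"
  shows "p = q"
  using assms stage_admissible[of \<alpha>] unfolding admissible_def stage_points_def by auto

lemma graph_points_functional:
  assumes "(x, y) \<in> graph_points" "(x, y') \<in> graph_points"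
  shows "y = y'"
proof -
  obtain \<alpha> \<beta> where p: "(x, y) \<in> stage_points (stage \<alpha>)" and q: "(x, y') \<in> stage_points (stage \<beta>)"
    using assms unfolding graph_points_def by blast
  consider "\<alpha> = \<beta>" | "\<alpha> \<in> underS continuum_order \<beta>" | "\<beta> \<in> underS continuum_order \<alpha>"
    using continuum_order_total by blast
  then show ?thesis
  proof cases
    case 1
    then show ?thesis
      using stage_points_same_fst[of "(x, y)" \<alpha> "(x, y')"] p q by simp
  next
    case 2
    then show ?thesis
      using earlier_stage_used_reals(1)[OF 2 p] stage_points_fresh[OF q] by simp
  next
    case 3
    then show ?thesis
      using earlier_stage_used_reals(1)[OF 3 q] stage_points_fresh[OF p] by simp
  qed
qed

lemma base_fun_eq: "(x, y) \<in> graph_points \<Longrightarrow> base_fun x = y"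
  unfolding base_fun_def using graph_points_functional by (intro the_equality) auto

lemma marker_notin_graph_points: "marker \<alpha> \<notin> fst ` graph_points"
proof
  assume "marker \<alpha> \<in> fst ` graph_points"
  then obtain \<beta> p where p: "p \<in> stage_points (stage \<beta>)" "fst p = marker \<alpha>"
    unfolding graph_points_def by auto
  consider "\<alpha> = \<beta>" | "\<alpha> \<in> underS continuum_order \<beta>" | "\<beta> \<in> underS continuum_order \<alpha>"
    using continuum_order_total by blast
  then show False
  proof cases
    case 1
    then show ?thesis
      using marker_fresh(2)[of \<alpha>] p by force
  next
    case 2
    then show ?thesis
      using earlier_stage_used_reals(2)[OF 2] stage_points_fresh[OF p(1)] p(2) by simp
  next
    case 3
    then show ?thesis
      using earlier_stage_used_reals(1)[OF 3 p(1)] marker_fresh(1)[of \<alpha>] p(2) by simp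
  qed
qed

lemma inj_marker: "inj marker"
proof (rule injI)
  fix \<alpha> \<beta> assume "marker \<alpha> = marker \<beta>"
  then show "\<alpha> = \<beta>"
    using continuum_order_total[of \<alpha> \<beta>] earlier_stage_used_reals(2)[of \<alpha> \<beta>]
      earlier_stage_used_reals(2)[of \<beta> \<alpha>] marker_fresh(1)[of \<alpha>] marker_fresh(1)[of \<beta>] by auto
qed

lemma marked_fun_graph_points: "(x, y) \<in> graph_points \<Longrightarrow> marked_fun X x = y"
  unfolding marked_fun_def using base_fun_eq by (simp add: rev_image_eqI)

lemma stage_points_in_graph: "p \<in> stage_points (stage \<alpha>) \<Longrightarrow> p \<in> graph_of (marked_fun X)"
proof -
  assume "p \<in> stage_points (stage \<alpha>)"
  then have "(fst p, snd p) \<in> graph_points"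
    unfolding graph_points_def by auto
  then have "marked_fun X (fst p) = snd p"
    by (rule marked_fun_graph_points)
  then show ?thesis
    by (cases p) (simp add: graph_of_iff)
qed

lemma marked_fun_marker: "marked_fun X (marker \<alpha>) = (if \<alpha> \<in> X then 1 else 0)"
  using marker_notin_graph_points[of \<alpha>] inj_image_mem_iff[OF inj_marker]
  by (simp add: marked_fun_def)

lemma inj_marked_fun: "inj marked_fun"
proof (rule injI)
  fix X Y assume "marked_fun X = marked_fun Y"
  then have "marked_fun X (marker \<alpha>) = marked_fun Y (marker \<alpha>)" for \<alpha>
    by simp
  then have "\<alpha> \<in> X \<longleftrightarrow> \<alpha> \<in> Y" for \<alpha>
    unfolding marked_fun_marker by (metis zero_neq_one)
  then show "X = Y" by blast
qed

lemma marked_fun_allowed: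
  assumes "u \<in> determined_abscissae stage \<alpha> (stage \<alpha>)"
  shows "(u, marked_fun Y u) \<in> allowed_points stage \<alpha> (stage \<alpha>)"
proof (cases "u \<in> earlier_markers stage \<alpha>")
  case True
  then obtain \<beta> where "u = marker \<beta>"
    unfolding earlier_markers_def marker_def by blast
  then have "marked_fun Y u \<in> {0, 1}"
    by (simp add: marked_fun_marker)
  then show ?thesis
    using True unfolding allowed_points_def by blast
next
  case False
  then obtain p where p: "p \<in> earlier_points stage \<alpha> \<union> stage_points (stage \<alpha>)" "fst p = u"
    using assms unfolding determined_abscissae_def by blast
  then have "(u, snd p) \<in> graph_points"
    unfolding earlier_points_def graph_points_def by auto
  then have "marked_fun Y u = snd p"
    by (rule marked_fun_graph_points)
  then have "(u, marked_fun Y u) = p"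
    using p(2) by (simp add: prod_eq_iff)
  then show ?thesis
    using p(1) unfolding allowed_points_def by blast
qed

lemma jones_set_marked_fun: "jones_set (graph_of (marked_fun X))"
  unfolding jones_set_def
proof (intro allI impI notI)
  fix K a b
  assume K: "closed K \<and> K \<inter> graph_of (marked_fun X) = {} \<and> a < b" and "{a<..<b} \<subseteq> fst ` K"
  obtain \<alpha> where task: "task_of \<alpha> = Inl K"
    using task_of_Inl K by blast
  obtain x where "a < x" "x < b" "x \<notin> used_reals stage \<alpha>"
    using interval_not_subset_sub_continuum K sub_continuum_used_reals by blast
  moreover obtain y where "(x, y) \<in> K"
    using \<open>{a<..<b} \<subseteq> fst ` K\<close> calculation by force
  moreover obtain z where adm: "admissible stage \<alpha> (((x, y), (x, y)), z)"
    using ex_admissible[of "(x, y)" stage \<alpha> "(x, y)"] calculation by auto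
  ultimately have "fulfils (task_of \<alpha>) stage \<alpha> (((x, y), (x, y)), z)"
    unfolding task fulfils_def stage_points_def by auto
  then have "fulfils (task_of \<alpha>) stage \<alpha> (stage \<alpha>)"
    by (rule stage_fulfils[OF adm])
  then obtain p where "p \<in> stage_points (stage \<alpha>)" "p \<in> K"
    unfolding task fulfils_def by auto
  then show False
    using K stage_points_in_graph by blast
qed

section \<open>Defeating continuous maps\<close>

lemma continuous_on_nonfixed_near:
  fixes g :: "'a::metric_space \<Rightarrow> 'a"
  assumes "continuous_on A g" "p0 \<in> A" "g p0 \<noteq> p0"
  obtains \<eta> where "\<eta> > 0" "\<And>p. p \<in> A \<Longrightarrow> dist p p0 < \<eta> \<Longrightarrow> g p \<noteq> p"
proof -
  have "continuous_on A (\<lambda>p. dist (g p) p)"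
    using assms(1) by (intro continuous_intros)
  moreover have "dist (g p0) p0 > 0"
    using assms(3) by simp
  ultimately obtain \<eta> where "\<eta> > 0" and close:
    "\<And>p. p \<in> A \<Longrightarrow> dist p p0 < \<eta> \<Longrightarrow> dist (dist (g p) p) (dist (g p0) p0) < dist (g p0) p0"
    using assms(2) unfolding continuous_on_iff by blast
  have "g p \<noteq> p" if "p \<in> A" "dist p p0 < \<eta>" for p
    using close[OF that] by (auto simp: dist_real_def)
  with \<open>\<eta> > 0\<close> show thesis
    by (rule that)
qed

lemma ex_defeating_stage_collapse:
  assumes "fst p \<notin> used_reals S \<alpha>" "fst q \<notin> used_reals S \<alpha>" "fst p \<noteq> fst q" "h p = h q"
  shows "\<exists>s. admissible S \<alpha> s \<and> defeats h S \<alpha> s"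
proof -
  obtain z where "admissible S \<alpha> ((p, q), z)"
    using ex_admissible[of p S \<alpha> q] assms(1-3) by blast
  moreover have "defeats h S \<alpha> ((p, q), z)"
    using assms(3,4) unfolding defeats_def stage_points_def by auto
  ultimately show ?thesis by blast
qed

text \<open>If \<open>h p = (u, v)\<close> with \<open>u\<close> not yet determined, adding \<open>(u, v + 1)\<close> to the stage determines it.\<close>

lemma ex_defeating_stage_displace:
  assumes "fst p \<notin> used_reals S \<alpha>" "h p \<noteq> p"
    and "h p \<notin> earlier_points S \<alpha> \<union> earlier_markers S \<alpha> \<times> {0, 1}"
  shows "\<exists>s. admissible S \<alpha> s \<and> defeats h S \<alpha> s"
proof -
  obtain u v where huv: "h p = (u, v)" by fastforce
  show ?thesis
  proof (cases "u \<notin> used_reals S \<alpha> \<and> u \<noteq> fst p")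
    case True
    obtain z where "admissible S \<alpha> ((p, (u, v + 1)), z)"
      using ex_admissible[of p S \<alpha> "(u, v + 1)"] True assms(1) by auto
    moreover have "defeats h S \<alpha> ((p, (u, v + 1)), z)"
      unfolding defeats_def
    proof (intro disjI2 bexI[of _ p] conjI)
      show "fst (h p) \<in> determined_abscissae S \<alpha> ((p, (u, v + 1)), z)"
        using huv by (force simp: determined_abscissae_def stage_points_def)
      show "h p \<notin> allowed_points S \<alpha> ((p, (u, v + 1)), z)"
        using huv assms(2,3) by (auto simp: allowed_points_def stage_points_def)
    qed (simp add: stage_points_def)
    ultimately show ?thesis by blast
  next
    case False
    obtain z where "admissible S \<alpha> ((p, p), z)"
      using ex_admissible[of p S \<alpha> p] assms(1) by auto
    moreover have "defeats h S \<alpha> ((p, p), z)"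
      unfolding defeats_def
    proof (intro disjI2 bexI[of _ p] conjI)
      show "fst (h p) \<in> determined_abscissae S \<alpha> ((p, p), z)"
        using huv False by (auto simp: determined_abscissae_def stage_points_def used_reals_def)
      show "h p \<notin> allowed_points S \<alpha> ((p, p), z)"
        using huv assms(2,3) by (auto simp: allowed_points_def stage_points_def)
    qed (simp add: stage_points_def)
    ultimately show ?thesis by blast
  qed
qed

text \<open>If \<open>h\<close> is not injective on the fresh points of a short horizontal segment through \<open>p\<^sub>0\<close>, two
  of them form a defeating stage. Otherwise few of these points are sent to earlier allowed
  points, and the Baire category theorem provides a fresh one that is not.\<close>

lemma ex_defeating_stage:
  fixes h :: "point \<Rightarrow> point" and \<U> :: "point set set"
  assumes J: "jones_set G" and "countable \<U>" and "\<And>U. U \<in> \<U> \<Longrightarrow> open U"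
    and "G \<subseteq> \<Inter>\<U>" and cont: "continuous_on (\<Inter>\<U>) h"
    and p0: "p0 \<in> G" "h p0 \<noteq> p0"
  shows "\<exists>s. admissible S \<alpha> s \<and> defeats h S \<alpha> s"
proof -
  obtain x0 y0 where p0_eq: "p0 = (x0, y0)" by fastforce
  obtain \<eta> where "\<eta> > 0" and moved: "\<And>p. p \<in> \<Inter>\<U> \<Longrightarrow> dist p p0 < \<eta> \<Longrightarrow> h p \<noteq> p"
    using continuous_on_nonfixed_near[OF cont] p0 \<open>G \<subseteq> \<Inter>\<U>\<close> by blast
  define a where "a = x0 - \<eta>/2"
  define b where "b = x0 + \<eta>/2"
  have "a < b"
    using \<open>\<eta> > 0\<close> by (simp add: a_def b_def)
  define X where "X = {x. a < x \<and> x < b \<and> x \<notin> used_reals S \<alpha> \<and> (x, y0) \<in> \<Inter>\<U>}"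
  show ?thesis
  proof (cases "inj_on (\<lambda>x. h (x, y0)) X")
    case False
    then obtain x1 x2 where "x1 \<in> X" "x2 \<in> X" "x1 \<noteq> x2" "h (x1, y0) = h (x2, y0)"
      unfolding inj_on_def by blast
    then show ?thesis
      by (intro ex_defeating_stage_collapse[of "(x1, y0)" _ _ "(x2, y0)"]) (auto simp: X_def)
  next
    case True
    define B where "B = earlier_points S \<alpha> \<union> earlier_markers S \<alpha> \<times> {0, 1}"
    have "inj_on (\<lambda>x. h (x, y0)) {x\<in>X. h (x, y0) \<in> B}"
      using True by (rule inj_on_subset) auto
    moreover have "sub_continuum B"
      unfolding B_def
      by (intro sub_continuum_Un sub_continuum_earlier_points sub_continuum_earlier_markers_Times)
    ultimately have few: "sub_continuum {x\<in>X. h (x, y0) \<in> B}"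
      using sub_continuum_inj_on[of "\<lambda>x. h (x, y0)" _ B] by blast
    obtain x where x: "a < x" "x < b" "x \<notin> used_reals S \<alpha> \<union> {x\<in>X. h (x, y0) \<in> B}"
      "(x, y0) \<in> \<Inter>\<U>"
      by (rule jones_set_Gdelta_horizontal[OF J \<open>countable \<U>\<close> assms(3) \<open>G \<subseteq> \<Inter>\<U>\<close> \<open>a < b\<close>
          sub_continuum_Un[OF sub_continuum_used_reals few]])
    then have "x \<in> X"
      by (simp add: X_def)
    then have "h (x, y0) \<notin> B"
      using x(3) by blast
    moreover have "dist (x, y0) p0 < \<eta>"
      using x(1,2) by (simp add: p0_eq dist_horizontal a_def b_def abs_less_iff)
    then have "h (x, y0) \<noteq> (x, y0)"
      using moved x(4) by blast
    ultimately show ?thesis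
      using x(3) unfolding B_def by (intro ex_defeating_stage_displace) auto
  qed
qed

section \<open>Rigidity\<close>

lemma Lavrentiev_extension_Gdelta:
  fixes f :: "'a::metric_space \<Rightarrow> 'b::complete_space"
  assumes "continuous_on S f"
  obtains \<U> g where "countable \<U>" "\<forall>U\<in>\<U>. open U" "S \<subseteq> \<Inter>\<U>"
    "continuous_on (\<Inter>\<U>) g" "\<forall>x\<in>S. g x = f x"
proof -
  obtain A g where A: "gdelta_in euclidean A" "S \<subseteq> A"
    and "continuous_map (subtopology euclidean A) euclidean g" "\<And>x. x \<in> S \<Longrightarrow> g x = f x"
    by (rule Lavrentiev_extension[of S euclidean euclidean f])
      (use assms metrizable_space_euclidean completely_metrizable_space_euclidean in auto)
  moreover obtain \<U> where "countable \<U>" "\<U> \<subseteq> Collect open" "\<Inter>\<U> = A"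
    using A(1) unfolding gdelta_in_alt intersection_of_def by auto
  ultimately show thesis
    using that[of \<U> g] by (auto simp: continuous_map_iff_continuous)
qed

lemma graph_closure_unique:
  fixes g :: "'a::metric_space \<Rightarrow> 'b::metric_space"
  assumes "continuous_on A g" "p \<in> A" "(p, q) \<in> closure ((\<lambda>p. (p, g p)) ` A)"
  shows "q = g p"
proof (rule ccontr)
  assume "q \<noteq> g p"
  define \<epsilon> where "\<epsilon> = dist q (g p)"
  have "\<epsilon> > 0"
    using \<open>q \<noteq> g p\<close> by (simp add: \<epsilon>_def)
  then obtain d where "d > 0" and d: "\<And>x. x \<in> A \<Longrightarrow> dist x p < d \<Longrightarrow> dist (g x) (g p) < \<epsilon>/2"
    using assms(1,2) unfolding continuous_on_iff by (meson half_gt_zero)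
  have "min d (\<epsilon>/2) > 0"
    using \<open>d > 0\<close> \<open>\<epsilon> > 0\<close> by simp
  then obtain x where x: "x \<in> A" "dist (x, g x) (p, q) < min d (\<epsilon>/2)"
    using assms(3) unfolding closure_approachable by blast
  then have "dist x p < d" "dist (g x) q < \<epsilon>/2"
    using dist_fst_le[of "(x, g x)" "(p, q)"] dist_snd_le[of "(x, g x)" "(p, q)"] by auto
  moreover have "\<epsilon> \<le> dist q (g x) + dist (g x) (g p)"
    unfolding \<epsilon>_def by (rule dist_triangle)
  ultimately show False
    using d[OF x(1)] by (simp add: dist_commute)
qed

lemma graph_fun_closure_graph:
  assumes "continuous_on A g" "p \<in> A"
  shows "graph_fun (closure ((\<lambda>p. (p, g p)) ` A)) p = g p"
proof -
  have "(p, g p) \<in> closure ((\<lambda>p. (p, g p)) ` A)"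
    using assms(2) closure_subset by fastforce
  then have "(p, graph_fun (closure ((\<lambda>p. (p, g p)) ` A)) p) \<in> closure ((\<lambda>p. (p, g p)) ` A)"
    unfolding graph_fun_def by (rule someI)
  then show ?thesis
    by (rule graph_closure_unique[OF assms])
qed

lemma defeated_not_embedding:
  assumes "defeats h stage \<alpha> (stage \<alpha>)"
    and inj: "inj_on h (graph_of (marked_fun X))"
    and into: "h ` graph_of (marked_fun X) \<subseteq> graph_of (marked_fun Y)"
  shows False
  using assms(1) unfolding defeats_def
proof (elim disjE bexE conjE)
  fix p q
  assume "p \<in> stage_points (stage \<alpha>)" "q \<in> stage_points (stage \<alpha>)" "fst p \<noteq> fst q" "h p = h q"
  moreover have "p \<in> graph_of (marked_fun X)" "q \<in> graph_of (marked_fun X)"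
    using calculation(1,2) by (auto intro: stage_points_in_graph)
  ultimately show False
    using inj by (auto dest: inj_onD)
next
  fix p
  assume "p \<in> stage_points (stage \<alpha>)" and determined: "fst (h p) \<in> determined_abscissae stage \<alpha> (stage \<alpha>)"
    and "h p \<notin> allowed_points stage \<alpha> (stage \<alpha>)"
  moreover have "h p \<in> graph_of (marked_fun Y)"
    using into stage_points_in_graph[OF \<open>p \<in> _\<close>] by blast
  then have "h p = (fst (h p), marked_fun Y (fst (h p)))"
    by (cases "h p") (simp add: graph_of_iff)
  ultimately show False
    using marked_fun_allowed[OF determined, of Y] by simp
qed

text \<open>Extend the map to a continuous \<open>g\<close> on a \<open>G\<^sub>\<delta>\<close> set (Lavrentiev); the closure of the graph of
  \<open>g\<close> is one of the tasks, and at its stage the map has been defeated.\<close>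

lemma embedding_of_marked_fun_is_id:
  assumes "continuous_on (graph_of (marked_fun X)) \<phi>" "inj_on \<phi> (graph_of (marked_fun X))"
    and "\<phi> ` graph_of (marked_fun X) \<subseteq> graph_of (marked_fun Y)"
    and "p \<in> graph_of (marked_fun X)"
  shows "\<phi> p = p"
proof (rule ccontr)
  let ?G = "graph_of (marked_fun X)"
  assume "\<phi> p \<noteq> p"
  obtain \<U> g where "countable \<U>" "\<forall>U\<in>\<U>. open U" "?G \<subseteq> \<Inter>\<U>"
    and "continuous_on (\<Inter>\<U>) g" and g_\<phi>: "\<forall>p\<in>?G. g p = \<phi> p"
    by (rule Lavrentiev_extension_Gdelta[OF assms(1)])
  then have \<U>: "countable \<U>" "\<And>U. U \<in> \<U> \<Longrightarrow> open U" "?G \<subseteq> \<Inter>\<U>"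
    by blast+
  define \<Gamma> where "\<Gamma> = closure ((\<lambda>p. (p, g p)) ` \<Inter>\<U>)"
  obtain \<alpha> where task: "task_of \<alpha> = Inr \<Gamma>"
    using task_of_Inr[of \<Gamma>] by (auto simp: \<Gamma>_def)
  have h_g: "graph_fun \<Gamma> q = g q" if "q \<in> \<Inter>\<U>" for q
    unfolding \<Gamma>_def using graph_fun_closure_graph[OF \<open>continuous_on (\<Inter>\<U>) g\<close> that] .
  then have cont: "continuous_on (\<Inter>\<U>) (graph_fun \<Gamma>)"
    using continuous_on_cong[of "\<Inter>\<U>" "\<Inter>\<U>" "graph_fun \<Gamma>" g] \<open>continuous_on (\<Inter>\<U>) g\<close> by simp
  have h_\<phi>: "graph_fun \<Gamma> q = \<phi> q" if "q \<in> ?G" for q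
  proof -
    have "q \<in> \<Inter>\<U>"
      using \<U>(3) that by blast
    then show ?thesis
      using h_g g_\<phi> that by simp
  qed
  then have "graph_fun \<Gamma> p \<noteq> p"
    using assms(4) \<open>\<phi> p \<noteq> p\<close> by simp
  then obtain s where "admissible stage \<alpha> s" "defeats (graph_fun \<Gamma>) stage \<alpha> s"
    using ex_defeating_stage[OF jones_set_marked_fun \<U> cont assms(4)] by blast
  then have "defeats (graph_fun \<Gamma>) stage \<alpha> (stage \<alpha>)"
    using stage_fulfils[of \<alpha> s] task by (simp add: fulfils_def)
  moreover have "inj_on (graph_fun \<Gamma>) ?G \<longleftrightarrow> inj_on \<phi> ?G"
    by (rule inj_on_cong) (rule h_\<phi>)
  moreover have "graph_fun \<Gamma> ` ?G = \<phi> ` ?G"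
    by (rule image_cong) (simp_all add: h_\<phi>)
  ultimately show False
    using defeated_not_embedding assms(2,3) by metis
qed

lemma marked_fun_rigid:
  assumes "S \<subseteq> graph_of (marked_fun Y)" "graph_of (marked_fun X) homeomorphic S"
  shows "marked_fun X = marked_fun Y \<and> S = graph_of (marked_fun Y)"
proof -
  let ?G = "graph_of (marked_fun X)"
  obtain \<phi> \<psi> where hom: "homeomorphism ?G S \<phi> \<psi>"
    using assms(2) unfolding homeomorphic_def by blast
  then have "continuous_on ?G \<phi>" "\<phi> ` ?G = S"
    unfolding homeomorphism_def by simp_all
  moreover have "inj_on \<phi> ?G"
    using homeomorphism_apply1[OF hom] by (rule inj_on_inverseI)
  ultimately have "\<phi> p = p" if "p \<in> ?G" for p
    using embedding_of_marked_fun_is_id[of X \<phi> Y p] assms(1) that by blast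
  then have "\<phi> ` ?G = (\<lambda>p. p) ` ?G"
    by (rule image_cong[OF refl])
  then have "S = ?G"
    using \<open>\<phi> ` ?G = S\<close> by simp
  have "marked_fun X x = marked_fun Y x" for x
  proof -
    have "(x, marked_fun X x) \<in> graph_of (marked_fun Y)"
      using assms(1) \<open>S = ?G\<close> graph_of_iff[of x "marked_fun X x" "marked_fun X"] by blast
    then show ?thesis
      by (simp add: graph_of_iff)
  qed
  then have "marked_fun X = marked_fun Y" ..
  with \<open>S = ?G\<close> show ?thesis
    by simp
qed

theorem theorem1:
  shows "\<exists>\<F> :: (real \<Rightarrow> real) set.
           \<F> \<approx> (UNIV :: real set set) \<and>
           (\<forall>f\<in>\<F>. connected (graph_of f) \<and> closure (graph_of f) = UNIV) \<and>
           incomparable_graphs \<F>"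
proof (intro exI[of _ "range marked_fun"] conjI)
  show "range marked_fun \<approx> (UNIV :: real set set)"
  proof -
    have "bij_betw marked_fun UNIV (range marked_fun)"
      using inj_marked_fun by (rule bij_betw_imageI) simp
    then have "(UNIV :: real set set) \<approx> range marked_fun"
      unfolding eqpoll_def by blast
    then show ?thesis
      by (rule eqpoll_sym)
  qed
  show "\<forall>f\<in>range marked_fun. connected (graph_of f) \<and> closure (graph_of f) = UNIV"
    using jones_set_marked_fun jones_set_graph_connected jones_set_dense by blast
  show "incomparable_graphs (range marked_fun)"
    unfolding incomparable_graphs_def
  proof (intro ballI allI impI)
    fix f g S
    assume "f \<in> range marked_fun" "g \<in> range marked_fun" "S \<subseteq> graph_of g \<and> graph_of f homeomorphic S"
    then show "f = g \<and> S = graph_of g"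
      using marked_fun_rigid by blast
  qed
qed

end
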